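(* Let $C^*>0$ and $\tilde C_1=C^*+\tfrac12$. Let $\Phi,\phi\in\mathcal C_{\rm per}$ satisfy $\|\Phi\|_\infty,\|\Phi\|_2,\|\Delta_h\Phi\|_2\le C^*$, $\|\phi\|_2=1$, and $\|\phi\|_\infty,\|\Delta_h\phi\|_2\le\tilde C_1$. Set $e=\Phi-\phi$ and $$\mathcal{NLE}:=|\phi|^2e+\big(\overline{\Phi}\,e+\phi\,\overline{e}\big)\Phi$$ (pointwise products). Then there are constants $\tilde C_2,\tilde C_3>0$ depending only on $C^*$ (not on $N$, $\Phi$, $\phi$) such that $$\|\mathcal{NLE}\|_2\le\tilde C_2\|e\|_2,\qquad \|\Delta_h\mathcal{NLE}\|_2\le\tilde C_3\big(\|e\|_2+\|\Delta_he\|_2\big).$$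
   Context: Grid setting: $\Omega=(0,1)^3$, $N$ a positive integer, $h=1/N$. $\mathcal C_{\rm per}$ is the space of complex-valued grid functions on the points $(ih,jh,kh)$, $N$-periodic in each index. Discrete inner product $\langle f,g\rangle=h^3\sum_{i,j,k=1}^N\overline{f_{i,j,k}}\,g_{i,j,k}$, $\|f\|_2=\langle f,f\rangle^{1/2}$, $\|f\|_\infty=\max|f_{i,j,k}|$. $\Delta_h$ is the standard 7-point discrete Laplacian with periodic wrap-around, $(\Delta_hf)_{i,j,k}=h^{-2}(f_{i+1,j,k}+f_{i-1,j,k}+f_{i,j+1,k}+f_{i,j-1,k}+f_{i,j,k+1}+f_{i,j,k-1}-6f_{i,j,k})$; $\overline{\cdot}$ is complex conjugation. *)

theory Defs
  imports Complex_Main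
begin

type_synonym grid = "int \<Rightarrow> int \<Rightarrow> int \<Rightarrow> complex"

definition per :: "nat \<Rightarrow> grid \<Rightarrow> bool" where
  "per N f \<longleftrightarrow> (\<forall>i j k. f (i + int N) j k = f i j k \<and> f i (j + int N) k = f i j k
                          \<and> f i j (k + int N) = f i j k)"

definition gh :: "nat \<Rightarrow> real" where "gh N = 1 / real N"

definition norm2 :: "nat \<Rightarrow> grid \<Rightarrow> real" where
  "norm2 N f = sqrt (gh N ^ 3 * (\<Sum>i\<in>{1..int N}. \<Sum>j\<in>{1..int N}. \<Sum>k\<in>{1..int N}. (cmod (f i j k))\<^sup>2))"

definition normi :: "nat \<Rightarrow> grid \<Rightarrow> real" where
  "normi N f = Max {cmod (f i j k) | i j k. i \<in> {1..int N} \<and> j \<in> {1..int N} \<and> k \<in> {1..int N}}"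

definition lap :: "nat \<Rightarrow> grid \<Rightarrow> grid" where
  "lap N f = (\<lambda>i j k. complex_of_real (1 / gh N ^ 2) *
     (f (i+1) j k + f (i-1) j k + f i (j+1) k + f i (j-1) k + f i j (k+1) + f i j (k-1) - 6 * f i j k))"

definition NLE :: "grid \<Rightarrow> grid \<Rightarrow> grid" where
  "NLE \<Phi> \<phi> = (\<lambda>i j k. let e = \<Phi> i j k - \<phi> i j k in
     complex_of_real ((cmod (\<phi> i j k))\<^sup>2) * e + (cnj (\<Phi> i j k) * e + \<phi> i j k * cnj e) * \<Phi> i j k)"

end

theory Submission
  imports Defs "HOL-Analysis.Analysis"
begin

text \<open>Then \<open>NLE = (|\<phi>|\<^sup>2 + |\<Phi>|\<^sup>2) e + \<phi> \<Phi> (cnj e)\<close>, so the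
  \<open>\<ell>\<^sup>2\<close> bound holds pointwise. For the Laplacian, the discrete product rule
  \<open>\<Delta>(u v) = u \<Delta>v + v \<Delta>u + \<Sum>\<^sub>d (D\<^sub>d u D\<^sub>d v + shifted)\<close>, with forward differences \<open>D\<^sub>d\<close>,
  reduces everything to three estimates that are uniform in \<open>N\<close>:
  \<^item> the discrete Sobolev inequality \<open>\<parallel>f\<parallel>\<^sub>\<infinity> \<le> K (\<parallel>f\<parallel>\<^sub>2 + \<parallel>\<Delta>f\<parallel>\<^sub>2)\<close>, from Fourier inversion and
    Cauchy--Schwarz, since \<open>\<Sum>\<^sub>k (1 + \<lambda>\<^sub>k)\<^sup>-\<^sup>2\<close> stays bounded in three dimensions;
  \<^item> \<open>\<parallel>D\<^sub>d\<^sup>2 f\<parallel>\<^sub>2 \<le> \<parallel>\<Delta>f\<parallel>\<^sub>2\<close>, as the Fourier symbol of \<open>D\<^sub>d\<^sup>2\<close> is one of the three nonnegative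
    summands of the symbol of \<open>\<Delta>\<close>;
  \<^item> \<open>\<parallel>D\<^sub>d f\<parallel>\<^sub>4\<^sup>2 \<le> 3 \<parallel>f\<parallel>\<^sub>\<infinity> \<parallel>D\<^sub>d\<^sup>2 f\<parallel>\<^sub>2\<close>, by summation by parts against \<open>D\<^sub>d f |D\<^sub>d f|\<^sup>2\<close>,
    which with Cauchy--Schwarz controls \<open>\<parallel>D\<^sub>d u D\<^sub>d v\<parallel>\<^sub>2\<close>.\<close>

section \<open>Periodic grid functions and discrete norms\<close>

definition grid_periodic :: "nat \<Rightarrow> (int \<Rightarrow> int \<Rightarrow> int \<Rightarrow> 'a) \<Rightarrow> bool" where
  "grid_periodic N g \<longleftrightarrow>
     (\<forall>i j k. g (i + int N) j k = g i j k \<and> g i (j + int N) k = g i j k \<and> g i j (k + int N) = g i j k)"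

lemma per_iff_grid_periodic: "per N f \<longleftrightarrow> grid_periodic N f"
  by (simp add: per_def grid_periodic_def)

lemma grid_periodic_comp: "grid_periodic N g \<Longrightarrow> grid_periodic N (\<lambda>i j k. F (g i j k))"
  by (simp add: grid_periodic_def)

lemma grid_periodic_comp2:
  "grid_periodic N g \<Longrightarrow> grid_periodic N h \<Longrightarrow> grid_periodic N (\<lambda>i j k. F (g i j k) (h i j k))"
  by (simp add: grid_periodic_def)

lemma grid_periodic_shift:
  assumes "grid_periodic N g"
  shows "grid_periodic N (\<lambda>i j k. g (i + a) (j + b) (k + c))"
  unfolding grid_periodic_def
proof (intro allI)
  fix i j k
  show "g (i + int N + a) (j + b) (k + c) = g (i + a) (j + b) (k + c) \<and>
        g (i + a) (j + int N + b) (k + c) = g (i + a) (j + b) (k + c) \<and>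
        g (i + a) (j + b) (k + int N + c) = g (i + a) (j + b) (k + c)"
    using assms[unfolded grid_periodic_def, rule_format, of "i + a" "j + b" "k + c"]
    by (simp add: add.commute add.left_commute)
qed

lemma periodic_add_mult:
  fixes h :: "int \<Rightarrow> 'a"
  assumes "\<And>x. h (x + int N) = h x"
  shows "h (x + int N * m) = h x"
proof -
  have "\<forall>x. h (x + int N * m) = h x"
  proof (induction m rule: int_induct[where k = 0])
    case (step1 m)
    then show ?case by (metis assms add.assoc distrib_left mult.right_neutral)
  next
    case (step2 m)
    then show ?case by (metis assms diff_add_cancel add.assoc right_diff_distrib' mult.right_neutral)
  qed simp
  then show ?thesis ..
qed

lemma sum_periodic_shift:
  fixes h :: "int \<Rightarrow> 'a::comm_monoid_add"
  assumes "\<And>x. h (x + int N) = h x"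
  shows "(\<Sum>x\<in>{1..int N}. h (x + c)) = (\<Sum>x\<in>{1..int N}. h x)"
proof -
  have shift_one: "(\<Sum>x\<in>{1..int N}. g (x + 1)) = (\<Sum>x\<in>{1..int N}. g x)"
    if g: "\<And>x. g (x + int N) = g x" for g :: "int \<Rightarrow> 'a"
  proof (cases "N = 0")
    case False
    have "(\<Sum>x\<in>{1..int N}. g (x + 1)) = (\<Sum>x\<in>{2..int N + 1}. g x)"
      by (rule sum.reindex_bij_witness[where i = "\<lambda>x. x - 1" and j = "\<lambda>x. x + 1"]) auto
    also have "\<dots> = g (1 + int N) + (\<Sum>x\<in>{2..int N}. g x)"
      using False by (simp add: atLeastAtMostPlus1_int_conv add.commute)
    also have "\<dots> = (\<Sum>x\<in>{1..int N}. g x)"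
      using False g[of 1] by (simp add: simp_from_to[of 1 "int N"] add.commute)
    finally show ?thesis .
  qed simp
  have periodic_shifted: "h (x + int N + d) = h (x + d)" for x d
    using assms[of "x + d"] by (simp add: algebra_simps)
  show ?thesis
  proof (induction c rule: int_induct[where k = 0])
    case (step1 c)
    have "(\<Sum>x\<in>{1..int N}. h (x + (c + 1))) = (\<Sum>x\<in>{1..int N}. h (x + 1 + c))"
      by (simp add: add.commute add.left_commute)
    also have "\<dots> = (\<Sum>x\<in>{1..int N}. h (x + c))"
      by (rule shift_one[of "\<lambda>x. h (x + c)"]) (rule periodic_shifted)
    finally show ?case using step1 by simp
  next
    case (step2 c)
    have "(\<Sum>x\<in>{1..int N}. h (x + c)) = (\<Sum>x\<in>{1..int N}. h (x + 1 + (c - 1)))"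
      by (simp add: add.commute add.left_commute)
    also have "\<dots> = (\<Sum>x\<in>{1..int N}. h (x + (c - 1)))"
      by (rule shift_one[of "\<lambda>x. h (x + (c - 1))"]) (rule periodic_shifted)
    finally show ?case using step2 by simp
  qed simp
qed

definition grid_box :: "nat \<Rightarrow> (int \<times> int \<times> int) set" where
  "grid_box N = {1..int N} \<times> {1..int N} \<times> {1..int N}"

lemma finite_grid_box [simp]: "finite (grid_box N)"
  by (simp add: grid_box_def)

lemma grid_periodic_reduce:
  assumes "grid_periodic N g" "N > 0"
  obtains i' j' k' where "(i', j', k') \<in> grid_box N" "g i j k = g i' j' k'"
proof -
  have N: "0 < int N" using assms(2) by simp
  have rep: "\<exists>x' m. x' \<in> {1..int N} \<and> x = x' + int N * m" for x
  proof (intro exI conjI)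
    show "(x - 1) mod int N + 1 \<in> {1..int N}"
      using pos_mod_bound[OF N, of "x - 1"] pos_mod_sign[OF N, of "x - 1"] by simp
    show "x = (x - 1) mod int N + 1 + int N * ((x - 1) div int N)"
      using mod_div_mult_eq[of "x - 1" "int N"] by (simp add: algebra_simps)
  qed
  obtain i' j' k' m1 m2 m3 where box: "(i', j', k') \<in> grid_box N"
    and ijk: "i = i' + int N * m1" "j = j' + int N * m2" "k = k' + int N * m3"
    using rep[of i] rep[of j] rep[of k] by (auto simp: grid_box_def)
  have "g (i' + int N * m1) j k = g i' j k" "g i' (j' + int N * m2) k = g i' j' k"
       "g i' j' (k' + int N * m3) = g i' j' k'"
    by (rule periodic_add_mult; use assms(1) in \<open>simp add: grid_periodic_def\<close>)+
  then show ?thesis using that[OF box] ijk by simp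
qed

lemma norm_le_normi:
  assumes "grid_periodic N f" "N > 0"
  shows "cmod (f i j k) \<le> normi N f"
proof -
  obtain i' j' k' where box: "(i', j', k') \<in> grid_box N" and "f i j k = f i' j' k'"
    using grid_periodic_reduce[OF assms] .
  moreover have "finite {cmod (f i j k) |i j k. i \<in> {1..int N} \<and> j \<in> {1..int N} \<and> k \<in> {1..int N}}"
    by (rule finite_subset[of _ "(\<lambda>(i, j, k). cmod (f i j k)) ` grid_box N"])
       (auto simp: grid_box_def image_iff intro!: bexI)
  ultimately show ?thesis
    unfolding normi_def using box by (intro Max_ge) (auto simp: grid_box_def)
qed

lemma norm_bound_nonneg: "(\<And>i j k. cmod (f i j k) \<le> M) \<Longrightarrow> 0 \<le> M"
  using norm_ge_zero order_trans by blast

definition grid_sum :: "nat \<Rightarrow> (int \<Rightarrow> int \<Rightarrow> int \<Rightarrow> 'a::comm_monoid_add) \<Rightarrow> 'a" where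
  "grid_sum N g = (\<Sum>i\<in>{1..int N}. \<Sum>j\<in>{1..int N}. \<Sum>k\<in>{1..int N}. g i j k)"

lemma grid_sum_box: "grid_sum N g = (\<Sum>(i, j, k)\<in>grid_box N. g i j k)"
  unfolding grid_sum_def grid_box_def by (simp add: sum.cartesian_product)

lemma grid_sum_cong:
  "(\<And>i j k. (i, j, k) \<in> grid_box N \<Longrightarrow> f i j k = g i j k) \<Longrightarrow> grid_sum N f = grid_sum N g"
  unfolding grid_sum_box by (intro sum.cong) auto

lemma grid_sum_add: "grid_sum N (\<lambda>i j k. f i j k + g i j k) = grid_sum N f + grid_sum N g"
  unfolding grid_sum_def by (simp add: sum.distrib)

lemma grid_sum_diff:
  "grid_sum N (\<lambda>i j k. f i j k - g i j k) = grid_sum N f - (grid_sum N g :: 'a::ab_group_add)"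
  unfolding grid_sum_def by (simp add: sum_subtractf)

lemma grid_sum_mult_left:
  "grid_sum N (\<lambda>i j k. c * f i j k) = c * (grid_sum N f :: 'a::comm_semiring_1)"
  unfolding grid_sum_def by (simp add: sum_distrib_left)

lemma grid_sum_of_real:
  "grid_sum N (\<lambda>i j k. of_real (f i j k)) = (of_real (grid_sum N f) :: 'a::real_algebra_1)"
  unfolding grid_sum_def by simp

lemma grid_sum_mono:
  "(\<And>i j k. (i, j, k) \<in> grid_box N \<Longrightarrow> f i j k \<le> g i j k) \<Longrightarrow> grid_sum N f \<le> (grid_sum N g :: real)"
  unfolding grid_sum_box by (intro sum_mono) auto

lemma grid_sum_nonneg: "(\<And>i j k. 0 \<le> f i j k) \<Longrightarrow> 0 \<le> (grid_sum N f :: real)"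
  unfolding grid_sum_def by (intro sum_nonneg) auto

lemma norm_grid_sum_le:
  "norm (grid_sum N f) \<le> grid_sum N (\<lambda>i j k. norm (f i j k :: 'a::real_normed_vector))"
  unfolding grid_sum_box split_def by (rule norm_sum)

lemma grid_sum_Cauchy_Schwarz:
  "grid_sum N (\<lambda>i j k. f i j k * g i j k)
     \<le> sqrt (grid_sum N (\<lambda>i j k. (f i j k)\<^sup>2)) * sqrt (grid_sum N (\<lambda>i j k. (g i j k :: real)\<^sup>2))"
proof -
  have "grid_sum N (\<lambda>i j k. f i j k * g i j k) \<le> sqrt ((grid_sum N (\<lambda>i j k. f i j k * g i j k))\<^sup>2)"
    by simp
  also have "\<dots> \<le> sqrt (grid_sum N (\<lambda>i j k. (f i j k)\<^sup>2) * grid_sum N (\<lambda>i j k. (g i j k)\<^sup>2))"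
    unfolding grid_sum_box split_def by (rule real_sqrt_le_mono, rule Cauchy_Schwarz_ineq_sum)
  finally show ?thesis by (simp add: real_sqrt_mult)
qed

lemma grid_sum_periodic_shift:
  assumes "grid_periodic N g"
  shows "grid_sum N (\<lambda>i j k. g (i + a) (j + b) (k + c)) = grid_sum N g"
proof -
  have "grid_sum N (\<lambda>i j k. g (i + a) (j + b) (k + c))
          = (\<Sum>i\<in>{1..int N}. \<Sum>j\<in>{1..int N}. \<Sum>k\<in>{1..int N}. g (i + a) (j + b) k)"
    unfolding grid_sum_def
    by (intro sum.cong refl sum_periodic_shift) (use assms in \<open>auto simp: grid_periodic_def\<close>)
  also have "\<dots> = (\<Sum>i\<in>{1..int N}. \<Sum>j\<in>{1..int N}. \<Sum>k\<in>{1..int N}. g (i + a) j k)"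
    by (intro sum.cong refl sum_periodic_shift[where h = "\<lambda>j. \<Sum>k\<in>{1..int N}. g _ j k"])
       (use assms in \<open>auto simp: grid_periodic_def\<close>)
  also have "\<dots> = grid_sum N g"
    unfolding grid_sum_def
    by (intro sum_periodic_shift[where h = "\<lambda>i. \<Sum>j\<in>{1..int N}. \<Sum>k\<in>{1..int N}. g i j k"])
       (use assms in \<open>auto simp: grid_periodic_def\<close>)
  finally show ?thesis .
qed

definition sum_sq :: "nat \<Rightarrow> grid \<Rightarrow> real" where
  "sum_sq N f = grid_sum N (\<lambda>i j k. (cmod (f i j k))\<^sup>2)"

lemma sum_sq_nonneg: "0 \<le> sum_sq N f"
  unfolding sum_sq_def by (rule grid_sum_nonneg) simp

lemma norm2_eq_sum_sq: "norm2 N f = sqrt (sum_sq N f / real N ^ 3)"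
  unfolding norm2_def sum_sq_def grid_sum_def gh_def by (simp add: power_divide)

lemma norm2_nonneg: "0 \<le> norm2 N f"
  unfolding norm2_eq_sum_sq by (simp add: sum_sq_nonneg)

lemma norm2_power2: "(norm2 N f)\<^sup>2 = sum_sq N f / real N ^ 3"
  unfolding norm2_eq_sum_sq by (simp add: sum_sq_nonneg)

lemma norm2_triangle: "norm2 N (\<lambda>i j k. f i j k + g i j k) \<le> norm2 N f + norm2 N g"
proof -
  have L2: "norm2 N h = sqrt (1 / real N ^ 3) * L2_set (\<lambda>(i, j, k). cmod (h i j k)) (grid_box N)"
    for h :: grid
    unfolding norm2_eq_sum_sq sum_sq_def grid_sum_box L2_set_def
    by (simp add: real_sqrt_mult real_sqrt_divide split_def)
  have "L2_set (\<lambda>(i, j, k). cmod (f i j k + g i j k)) (grid_box N)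
          \<le> L2_set (\<lambda>p. (\<lambda>(i, j, k). cmod (f i j k)) p + (\<lambda>(i, j, k). cmod (g i j k)) p) (grid_box N)"
    by (rule L2_set_mono) (auto intro: norm_triangle_ineq)
  also have "\<dots> \<le> L2_set (\<lambda>(i, j, k). cmod (f i j k)) (grid_box N) + L2_set (\<lambda>(i, j, k). cmod (g i j k)) (grid_box N)"
    by (rule L2_set_triangle_ineq)
  finally show ?thesis
    unfolding L2 by (simp add: distrib_left[symmetric] mult_left_mono)
qed

lemma norm2_le_pointwise:
  assumes "\<And>i j k. (i, j, k) \<in> grid_box N \<Longrightarrow> cmod (f i j k) \<le> c * cmod (g i j k)" "0 \<le> c"
  shows "norm2 N f \<le> c * norm2 N g"
proof -
  have "sum_sq N f \<le> c\<^sup>2 * sum_sq N g"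
    unfolding sum_sq_def grid_sum_mult_left[symmetric]
    by (rule grid_sum_mono) (metis assms power_mono power_mult_distrib norm_ge_zero)
  then have "sqrt (sum_sq N f / real N ^ 3) \<le> sqrt (c\<^sup>2 * (sum_sq N g / real N ^ 3))"
    by (intro real_sqrt_le_mono) (simp add: divide_right_mono)
  also have "\<dots> = c * sqrt (sum_sq N g / real N ^ 3)"
    using assms(2) by (simp only: real_sqrt_mult) simp
  finally show ?thesis
    unfolding norm2_eq_sum_sq .
qed

lemma norm2_cnj: "norm2 N (\<lambda>i j k. cnj (f i j k)) = norm2 N f"
  unfolding norm2_eq_sum_sq sum_sq_def by simp

lemma norm2_periodic_shift:
  assumes "grid_periodic N f"
  shows "norm2 N (\<lambda>i j k. f (i + a) (j + b) (k + c)) = norm2 N f"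
  unfolding norm2_eq_sum_sq sum_sq_def
  using grid_sum_periodic_shift[OF grid_periodic_comp[OF assms, of "\<lambda>z. (cmod z)\<^sup>2"]] by simp

section \<open>The discrete Fourier transform\<close>

lemma cis_2pi_int: "cis (2 * pi * of_int m) = 1"
  using cis_multiple_2pi[of "of_int m"] by simp

lemma sum_cis_multiples:
  assumes "N > 0"
  shows "(\<Sum>t\<in>{1..int N}. cis (2 * pi * of_int (t * r) / real N)) = (if int N dvd r then of_nat N else 0)"
proof (cases "int N dvd r")
  case True
  then obtain m where "r = int N * m" by blast
  then have "2 * pi * of_int (t * r) / real N = 2 * pi * of_int (t * m)" for t
    using assms by (simp add: field_simps)
  then show ?thesis using True by (simp add: cis_2pi_int)
next
  case False
  define w where "w t = cis (2 * pi * of_int (t * r) / real N)" for t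
  define z where "z = cis (2 * pi * of_int r / real N)"
  have "z * w t = w (t + 1)" for t
  proof -
    have "2 * pi * of_int r / real N + 2 * pi * of_int (t * r) / real N = 2 * pi * of_int ((t + 1) * r) / real N"
      using assms by (simp add: field_simps)
    then show ?thesis unfolding z_def w_def by (simp add: cis_mult)
  qed
  moreover have "w (t + int N) = w t" for t
  proof -
    have "2 * pi * of_int ((t + int N) * r) / real N = 2 * pi * of_int (t * r) / real N + 2 * pi * of_int r"
      using assms by (simp add: field_simps)
    then show ?thesis unfolding w_def by (simp add: cis_mult[symmetric] cis_2pi_int)
  qed
  ultimately have "z * (\<Sum>t\<in>{1..int N}. w t) = (\<Sum>t\<in>{1..int N}. w t)"
    using sum_periodic_shift[of w N 1] by (simp add: sum_distrib_left)
  then have "(z - 1) * (\<Sum>t\<in>{1..int N}. w t) = 0" by (simp add: algebra_simps)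
  moreover have "z \<noteq> 1"
  proof
    assume "z = 1"
    then have "cos (2 * pi * of_int r / real N) = 1" unfolding z_def by (simp add: complex_eq_iff)
    then obtain n :: int where "2 * pi * of_int r / real N = of_int n * 2 * pi"
      by (auto simp: cos_one_2pi_int)
    then have "of_int r = real_of_int n * real N" using assms by (simp add: field_simps)
    then have "r = n * int N" by (metis of_int_eq_iff of_int_mult of_int_of_nat_eq)
    then show False using False by simp
  qed
  ultimately show ?thesis using False unfolding w_def by simp
qed

lemma dvd_diff_iff_eq_in_period:
  assumes "a \<in> {1..int N}" "b \<in> {1..int N}"
  shows "int N dvd (a - b) \<longleftrightarrow> a = b"
proof
  assume dvd: "int N dvd (a - b)"
  show "a = b"
  proof (rule ccontr)
    assume "a \<noteq> b"
    then have "int N \<le> \<bar>a - b\<bar>" using dvd dvd_imp_le_int[of "a - b" "int N"] by simp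
    then show False using assms by auto
  qed
qed simp

lemma grid_sum_product:
  "grid_sum N (\<lambda>a b c. A a * B b * C c)
     = (\<Sum>a\<in>{1..int N}. A a) * (\<Sum>b\<in>{1..int N}. B b) * (\<Sum>c\<in>{1..int N}. (C c :: 'a::comm_semiring_1))"
proof -
  have "(\<Sum>a\<in>{1..int N}. A a) * (\<Sum>b\<in>{1..int N}. B b) * (\<Sum>c\<in>{1..int N}. C c) =
        (\<Sum>a\<in>{1..int N}. \<Sum>b\<in>{1..int N}. A a * B b) * (\<Sum>c\<in>{1..int N}. C c)"
    by (simp add: sum_product)
  then show ?thesis
    unfolding grid_sum_def by (simp only: sum_distrib_right) (simp only: sum_distrib_left)
qed

definition dot3 :: "int \<times> int \<times> int \<Rightarrow> int \<times> int \<times> int \<Rightarrow> int" where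
  "dot3 k p = fst k * fst p + fst (snd k) * fst (snd p) + snd (snd k) * snd (snd p)"

definition fourier_char :: "nat \<Rightarrow> int \<times> int \<times> int \<Rightarrow> int \<times> int \<times> int \<Rightarrow> complex" where
  "fourier_char N k p = cis (2 * pi * of_int (dot3 k p) / real N)"

definition dft :: "nat \<Rightarrow> grid \<Rightarrow> int \<times> int \<times> int \<Rightarrow> complex" where
  "dft N f k = grid_sum N (\<lambda>i j l. f i j l * cnj (fourier_char N k (i, j, l))) / of_nat N ^ 3"

lemma norm_fourier_char [simp]: "cmod (fourier_char N k p) = 1"
  by (simp add: fourier_char_def)

lemma fourier_char_add:
  "fourier_char N k (i + a, j + b, l + c) = fourier_char N k (i, j, l) * fourier_char N k (a, b, c)"
proof -
  have "2 * pi * of_int (dot3 k (i + a, j + b, l + c)) / real N =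
        2 * pi * of_int (dot3 k (i, j, l)) / real N + 2 * pi * of_int (dot3 k (a, b, c)) / real N"
    unfolding dot3_def by (simp add: divide_inverse algebra_simps)
  then show ?thesis unfolding fourier_char_def by (simp add: cis_mult)
qed

lemma cnj_fourier_char_mult_self: "cnj (fourier_char N k p) * fourier_char N k p = 1"
  unfolding fourier_char_def by (simp add: cis_cnj cis_mult)

lemma grid_periodic_fourier_char:
  assumes "N > 0"
  shows "grid_periodic N (\<lambda>i j l. fourier_char N k (i, j, l))"
proof -
  have period: "fourier_char N k (int N * a, int N * b, int N * c) = 1" for a b c
  proof -
    have "2 * pi * of_int (dot3 k (int N * a, int N * b, int N * c)) / real N = 2 * pi * of_int (dot3 k (a, b, c))"
      using assms unfolding dot3_def by (simp add: field_simps)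
    then show ?thesis unfolding fourier_char_def by (simp add: cis_2pi_int)
  qed
  have "fourier_char N k (i + int N, j, l) = fourier_char N k (i, j, l)"
    "fourier_char N k (i, j + int N, l) = fourier_char N k (i, j, l)"
    "fourier_char N k (i, j, l + int N) = fourier_char N k (i, j, l)" for i j l
    using fourier_char_add[of N k i "int N" j 0 l 0] fourier_char_add[of N k i 0 j "int N" l 0]
      fourier_char_add[of N k i 0 j 0 l "int N"] period[of 1 0 0] period[of 0 1 0] period[of 0 0 1]
    by simp_all
  then show ?thesis unfolding grid_periodic_def by simp
qed

lemma fourier_char_orthogonal:
  assumes "N > 0" "p \<in> grid_box N" "q \<in> grid_box N"
  shows "(\<Sum>k\<in>grid_box N. fourier_char N k p * cnj (fourier_char N k q)) = (if p = q then of_nat N ^ 3 else 0)"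
proof -
  obtain p1 p2 p3 q1 q2 q3 where pq: "p = (p1, p2, p3)" "q = (q1, q2, q3)" by (cases p, cases q)
  have "fourier_char N (a, b, c) p * cnj (fourier_char N (a, b, c) q) =
        cis (2 * pi * of_int (a * (p1 - q1)) / real N) * cis (2 * pi * of_int (b * (p2 - q2)) / real N) *
        cis (2 * pi * of_int (c * (p3 - q3)) / real N)" for a b c
  proof -
    have e: "2 * pi * of_int (dot3 (a, b, c) p) / real N + - (2 * pi * of_int (dot3 (a, b, c) q) / real N) =
          2 * pi * of_int (a * (p1 - q1)) / real N + 2 * pi * of_int (b * (p2 - q2)) / real N +
          2 * pi * of_int (c * (p3 - q3)) / real N"
      unfolding dot3_def pq by (simp add: divide_inverse algebra_simps)
    show ?thesis by (simp only: fourier_char_def cis_cnj cis_mult e)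
  qed
  note pointwise = this
  have "(\<Sum>k\<in>grid_box N. fourier_char N k p * cnj (fourier_char N k q)) =
        (\<Sum>(a, b, c)\<in>grid_box N. fourier_char N (a, b, c) p * cnj (fourier_char N (a, b, c) q))"
    by (intro sum.cong refl) (auto split: prod.split)
  also have "\<dots> = grid_sum N (\<lambda>a b c. cis (2 * pi * of_int (a * (p1 - q1)) / real N) *
               cis (2 * pi * of_int (b * (p2 - q2)) / real N) * cis (2 * pi * of_int (c * (p3 - q3)) / real N))"
    unfolding grid_sum_box pointwise ..
  also have "\<dots> =
             (if int N dvd (p1 - q1) then of_nat N else 0) * (if int N dvd (p2 - q2) then of_nat N else 0) *
             (if int N dvd (p3 - q3) then of_nat N else 0)"
    unfolding grid_sum_product sum_cis_multiples[OF assms(1)] ..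
  also have "\<dots> = (if p = q then of_nat N ^ 3 else 0)"
    using assms(2,3) unfolding grid_box_def pq by (auto simp: dvd_diff_iff_eq_in_period power3_eq_cube)
  finally show ?thesis .
qed

lemma dft_inversion:
  assumes "N > 0" "(i, j, l) \<in> grid_box N"
  shows "(\<Sum>k\<in>grid_box N. dft N f k * fourier_char N k (i, j, l)) = f i j l"
proof -
  define F where "F = (\<lambda>(i, j, l). f i j l)"
  have "(\<Sum>k\<in>grid_box N. dft N f k * fourier_char N k (i, j, l)) =
        (\<Sum>k\<in>grid_box N. \<Sum>q\<in>grid_box N. F q / of_nat N ^ 3 * (fourier_char N k (i, j, l) * cnj (fourier_char N k q)))"
    unfolding dft_def grid_sum_box F_def
    by (intro sum.cong refl) (simp add: sum_divide_distrib sum_distrib_left split_def mult_ac)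
  also have "\<dots> = (\<Sum>q\<in>grid_box N. F q / of_nat N ^ 3 * (\<Sum>k\<in>grid_box N. fourier_char N k (i, j, l) * cnj (fourier_char N k q)))"
    by (subst sum.swap) (simp add: sum_distrib_left)
  also have "\<dots> = (\<Sum>q\<in>grid_box N. if q = (i, j, l) then F q else 0)"
    by (intro sum.cong refl) (use assms in \<open>auto simp: fourier_char_orthogonal\<close>)
  also have "\<dots> = f i j l" using assms(2) by (simp add: F_def)
  finally show ?thesis .
qed

lemma parseval:
  assumes "N > 0"
  shows "(\<Sum>k\<in>grid_box N. (cmod (dft N f k))\<^sup>2) = sum_sq N f / real N ^ 3"
proof -
  define F where "F = (\<lambda>(i, j, l). f i j l)"
  have "complex_of_real (\<Sum>k\<in>grid_box N. (cmod (dft N f k))\<^sup>2) = (\<Sum>k\<in>grid_box N. dft N f k * cnj (dft N f k))"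
    unfolding of_real_sum by (intro sum.cong refl) (rule complex_norm_square)
  also have "\<dots> = (\<Sum>k\<in>grid_box N. \<Sum>q\<in>grid_box N. cnj (F q) / of_nat N ^ 3 * (dft N f k * fourier_char N k q))"
  proof -
    have "cnj (dft N f k) = (\<Sum>q\<in>grid_box N. cnj (F q) * fourier_char N k q) / of_nat N ^ 3" for k
      unfolding dft_def grid_sum_box F_def by (simp add: cnj_sum split_def)
    then show ?thesis by (simp add: sum_divide_distrib sum_distrib_left mult_ac)
  qed
  also have "\<dots> = (\<Sum>q\<in>grid_box N. cnj (F q) / of_nat N ^ 3 * (\<Sum>k\<in>grid_box N. dft N f k * fourier_char N k q))"
    by (subst sum.swap) (simp add: sum_distrib_left)
  also have "\<dots> = (\<Sum>q\<in>grid_box N. cnj (F q) * F q) / of_nat N ^ 3"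
    unfolding sum_divide_distrib
  proof (intro sum.cong refl)
    fix q assume "q \<in> grid_box N"
    then show "cnj (F q) / of_nat N ^ 3 * (\<Sum>k\<in>grid_box N. dft N f k * fourier_char N k q) =
               cnj (F q) * F q / of_nat N ^ 3"
      by (cases q) (simp add: F_def dft_inversion[OF assms])
  qed
  also have "\<dots> = complex_of_real (sum_sq N f / real N ^ 3)"
  proof -
    have "(complex_of_real (cmod z))\<^sup>2 = cnj z * z" for z
      using complex_norm_square[of z] by (simp add: mult.commute)
    then show ?thesis unfolding sum_sq_def grid_sum_box F_def by (simp add: split_def)
  qed
  finally show ?thesis by (simp only: of_real_eq_iff)
qed

lemma dft_periodic_shift:
  assumes "grid_periodic N f" "N > 0"
  shows "dft N (\<lambda>i j l. f (i + a) (j + b) (l + c)) k = fourier_char N k (a, b, c) * dft N f k"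
proof -
  define g where "g i j l = f i j l * cnj (fourier_char N k (i, j, l))" for i j l
  have "grid_periodic N g"
    unfolding g_def by (rule grid_periodic_comp2[OF assms(1) grid_periodic_fourier_char[OF assms(2)]])
  have "grid_sum N (\<lambda>i j l. f (i + a) (j + b) (l + c) * cnj (fourier_char N k (i, j, l))) =
        grid_sum N (\<lambda>i j l. fourier_char N k (a, b, c) * g (i + a) (j + b) (l + c))"
  proof (rule grid_sum_cong)
    fix i j l
    have "cnj (fourier_char N k (i, j, l))
            = cnj (fourier_char N k (i, j, l)) * (cnj (fourier_char N k (a, b, c)) * fourier_char N k (a, b, c))"
      by (simp add: cnj_fourier_char_mult_self)
    also have "\<dots> = cnj (fourier_char N k (i + a, j + b, l + c)) * fourier_char N k (a, b, c)"
      by (simp add: fourier_char_add)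
    finally show "f (i + a) (j + b) (l + c) * cnj (fourier_char N k (i, j, l)) =
                  fourier_char N k (a, b, c) * g (i + a) (j + b) (l + c)"
      unfolding g_def by simp
  qed
  also have "\<dots> = fourier_char N k (a, b, c) * grid_sum N g"
    by (simp add: grid_sum_mult_left grid_sum_periodic_shift[OF \<open>grid_periodic N g\<close>])
  finally show ?thesis unfolding dft_def g_def by simp
qed

lemma dft_add: "dft N (\<lambda>i j l. f i j l + g i j l) k = dft N f k + dft N g k"
  unfolding dft_def by (simp add: distrib_right grid_sum_add add_divide_distrib)

lemma dft_diff: "dft N (\<lambda>i j l. f i j l - g i j l) k = dft N f k - dft N g k"
  unfolding dft_def by (simp add: left_diff_distrib grid_sum_diff diff_divide_distrib)

lemma dft_mult_left: "dft N (\<lambda>i j l. c * f i j l) k = c * dft N f k"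
  unfolding dft_def by (simp add: grid_sum_mult_left[symmetric] mult.assoc)

definition diff2 :: "nat \<Rightarrow> int \<Rightarrow> int \<Rightarrow> int \<Rightarrow> grid \<Rightarrow> grid" where
  "diff2 N a b c f =
     (\<lambda>i j l. of_nat N ^ 2 * (f (i + a) (j + b) (l + c) - 2 * f i j l + f (i - a) (j - b) (l - c)))"

definition diff2_symbol :: "nat \<Rightarrow> int \<Rightarrow> real" where
  "diff2_symbol N t = real N ^ 2 * (2 - 2 * cos (2 * pi * of_int t / real N))"

definition lap_symbol :: "nat \<Rightarrow> int \<times> int \<times> int \<Rightarrow> real" where
  "lap_symbol N k = diff2_symbol N (fst k) + diff2_symbol N (fst (snd k)) + diff2_symbol N (snd (snd k))"

lemma diff2_symbol_nonneg: "0 \<le> diff2_symbol N t"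
  unfolding diff2_symbol_def using cos_le_one[of "2 * pi * of_int t / real N"] by simp

lemma lap_symbol_nonneg: "0 \<le> lap_symbol N k"
  unfolding lap_symbol_def by (simp add: diff2_symbol_nonneg)

lemma lap_eq_sum_diff2: "lap N f = (\<lambda>i j l. diff2 N 1 0 0 f i j l + diff2 N 0 1 0 f i j l + diff2 N 0 0 1 f i j l)"
  unfolding lap_def diff2_def gh_def by (intro ext) (simp add: algebra_simps power_one_over)

lemma lap_add: "lap N (\<lambda>i j l. f i j l + g i j l) = (\<lambda>i j l. lap N f i j l + lap N g i j l)"
  unfolding lap_def by (intro ext) (simp add: algebra_simps)

lemma lap_cnj: "lap N (\<lambda>i j l. cnj (f i j l)) = (\<lambda>i j l. cnj (lap N f i j l))"
  unfolding lap_def by (intro ext) simp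

lemma dft_diff2:
  assumes "grid_periodic N f" "N > 0"
  shows "dft N (diff2 N a b c f) k = - complex_of_real (diff2_symbol N (dot3 k (a, b, c))) * dft N f k"
proof -
  have "dft N (diff2 N a b c f) k = of_nat N ^ 2 * (dft N (\<lambda>i j l. f (i + a) (j + b) (l + c)) k
          - 2 * dft N f k + dft N (\<lambda>i j l. f (i + - a) (j + - b) (l + - c)) k)"
    unfolding diff2_def dft_mult_left dft_add dft_diff by simp
  also have "\<dots> = of_nat N ^ 2 * (fourier_char N k (a, b, c) + fourier_char N k (-a, -b, -c) - 2) * dft N f k"
    unfolding dft_periodic_shift[OF assms] by (simp add: algebra_simps)
  also have "fourier_char N k (a, b, c) + fourier_char N k (-a, -b, -c)
               = complex_of_real (2 * cos (2 * pi * of_int (dot3 k (a, b, c)) / real N))"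
  proof -
    have "dot3 k (-a, -b, -c) = - dot3 k (a, b, c)" unfolding dot3_def by simp
    then show ?thesis unfolding fourier_char_def by (simp add: complex_eq_iff)
  qed
  finally show ?thesis unfolding diff2_symbol_def by (simp add: algebra_simps)
qed

lemma dft_lap:
  assumes "grid_periodic N f" "N > 0"
  shows "dft N (lap N f) k = - complex_of_real (lap_symbol N k) * dft N f k"
  unfolding lap_eq_sum_diff2 dft_add dft_diff2[OF assms] lap_symbol_def dot3_def by (simp add: algebra_simps)

lemma sum_sq_eq_multiplier:
  assumes "N > 0" "\<And>k. k \<in> grid_box N \<Longrightarrow> dft N g k = complex_of_real (m k) * dft N f k"
  shows "sum_sq N g / real N ^ 3 = (\<Sum>k\<in>grid_box N. (m k)\<^sup>2 * (cmod (dft N f k))\<^sup>2)"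
  unfolding parseval[OF assms(1), symmetric]
  by (intro sum.cong refl) (simp add: assms(2) norm_mult power_mult_distrib)

lemma sum_sq_diff2_le_lap:
  assumes "grid_periodic N f" "N > 0" "(a, b, c) \<in> {(1, 0, 0), (0, 1, 0), (0, 0, 1)}"
  shows "sum_sq N (diff2 N a b c f) \<le> sum_sq N (lap N f)"
proof -
  have "sum_sq N (diff2 N a b c f) / real N ^ 3
          = (\<Sum>k\<in>grid_box N. (- diff2_symbol N (dot3 k (a, b, c)))\<^sup>2 * (cmod (dft N f k))\<^sup>2)"
    by (rule sum_sq_eq_multiplier[OF assms(2)]) (simp add: dft_diff2[OF assms(1,2)])
  also have "\<dots> \<le> (\<Sum>k\<in>grid_box N. (- lap_symbol N k)\<^sup>2 * (cmod (dft N f k))\<^sup>2)"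
  proof (intro sum_mono mult_right_mono)
    fix k
    have "diff2_symbol N (dot3 k (a, b, c)) \<le> lap_symbol N k"
      using assms(3) diff2_symbol_nonneg[of N] unfolding lap_symbol_def dot3_def by auto
    then show "(- diff2_symbol N (dot3 k (a, b, c)))\<^sup>2 \<le> (- lap_symbol N k)\<^sup>2"
      using diff2_symbol_nonneg[of N "dot3 k (a, b, c)"] by (simp add: power_mono)
  qed simp
  also have "\<dots> = sum_sq N (lap N f) / real N ^ 3"
    by (rule sum_sq_eq_multiplier[OF assms(2), symmetric]) (simp add: dft_lap[OF assms(1,2)])
  finally show ?thesis using assms(2) by (simp add: divide_le_cancel)
qed

section \<open>A discrete Sobolev inequality\<close>

lemma cos_ge_one_minus_sq_half:
  fixes x :: real assumes "0 \<le> x" shows "1 - x\<^sup>2 / 2 \<le> cos x"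
proof -
  let ?f = "\<lambda>x::real. cos x - 1 + x\<^sup>2 / 2"
  have "?f 0 \<le> ?f x"
  proof (rule DERIV_nonneg_imp_nondecreasing[OF assms])
    fix u :: real assume "0 \<le> u" "u \<le> x"
    show "\<exists>y. DERIV ?f u :> y \<and> 0 \<le> y"
      by (rule exI[of _ "- sin u + u"]) (auto intro!: derivative_eq_intros simp: sin_x_le_x \<open>0 \<le> u\<close>)
  qed
  then show ?thesis by simp
qed

lemma sin_ge_cubic:
  fixes x :: real assumes "0 \<le> x" shows "x - x ^ 3 / 6 \<le> sin x"
proof -
  let ?f = "\<lambda>x::real. sin x - x + x ^ 3 / 6"
  have "?f 0 \<le> ?f x"
  proof (rule DERIV_nonneg_imp_nondecreasing[OF assms])
    fix u :: real assume "0 \<le> u" "u \<le> x"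
    then have "0 \<le> cos u - 1 + u\<^sup>2 / 2" using cos_ge_one_minus_sq_half[of u] by simp
    then show "\<exists>y. DERIV ?f u :> y \<and> 0 \<le> y"
      by (intro exI[of _ "cos u - 1 + u\<^sup>2 / 2"]) (auto intro!: derivative_eq_intros)
  qed
  then show ?thesis by simp
qed

lemma one_minus_cos_ge:
  fixes x :: real assumes "0 \<le> x" "x \<le> pi" shows "x\<^sup>2 / 18 \<le> 1 - cos x"
proof -
  define y where "y = x / 2"
  have y: "0 \<le> y" "y \<le> 2" using assms pi_less_4 unfolding y_def by auto
  then have "y * (y * y) \<le> y * 4" by (intro mult_left_mono) (auto intro: mult_mono[of y 2 y 2, simplified])
  then have "y / 3 \<le> sin y" using sin_ge_cubic[OF y(1)] by (simp add: power3_eq_cube)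
  then have "(y / 3)\<^sup>2 \<le> (sin y)\<^sup>2" by (rule power_mono) (use y in simp)
  moreover have "cos x = 1 - 2 * (sin y)\<^sup>2" unfolding y_def using cos_double_sin[of "x / 2"] by simp
  ultimately show ?thesis unfolding y_def by (simp add: power_divide)
qed

lemma diff2_symbol_ge:
  assumes "N > 0" "t \<in> {1..int N}"
  shows "(real_of_int (min t (int N - t)))\<^sup>2 \<le> diff2_symbol N t"
proof -
  define d where "d = min t (int N - t)"
  have d: "0 \<le> d" "2 * d \<le> int N" using assms unfolding d_def by (auto simp: min_def)
  define x where "x = 2 * pi * of_int d / real N"
  have "cos (2 * pi * of_int t / real N) = cos x"
  proof (cases "d = t")
    case False
    then have "x = 2 * pi - 2 * pi * of_int t / real N"
      using assms(1) unfolding x_def d_def by (auto simp: min_def field_simps)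
    then show ?thesis by simp
  qed (simp add: x_def)
  moreover have "0 \<le> x" "x \<le> pi"
  proof -
    show "0 \<le> x" using d unfolding x_def by simp
    have "2 * of_int d / real N \<le> 1" using d(2) assms(1) by (simp add: field_simps)
    from mult_left_mono[OF this, of pi] show "x \<le> pi" unfolding x_def by (simp add: field_simps)
  qed
  ultimately have "x\<^sup>2 / 18 \<le> 1 - cos (2 * pi * of_int t / real N)"
    using one_minus_cos_ge by simp
  then have "real N ^ 2 * (x\<^sup>2 / 9) \<le> diff2_symbol N t"
    unfolding diff2_symbol_def by (intro mult_left_mono) auto
  moreover have "real N ^ 2 * (x\<^sup>2 / 9) = 4 * pi\<^sup>2 / 9 * (real_of_int d)\<^sup>2"
    unfolding x_def using assms(1) by (simp add: field_simps power2_eq_square)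
  moreover have "1 \<le> 4 * pi\<^sup>2 / 9"
    using pi_gt3 mult_mono[of 3 pi 3 pi] by (simp add: power2_eq_square)
  then have "(real_of_int d)\<^sup>2 \<le> 4 * pi\<^sup>2 / 9 * (real_of_int d)\<^sup>2"
    using mult_right_mono[of 1 "4 * pi\<^sup>2 / 9" "(real_of_int d)\<^sup>2"] by simp
  ultimately show ?thesis
    unfolding d_def by linarith
qed

text \<open>The exponent \<open>-2/3\<close> comes from splitting \<open>(1 + \<lambda>\<^sub>1 + \<lambda>\<^sub>2 + \<lambda>\<^sub>3)\<^sup>-\<^sup>2\<close> into three
  one-dimensional factors; each is summable over \<open>\<int>\<close> because \<open>\<lambda>\<^sub>t\<close> grows like \<open>t\<^sup>2\<close> and \<open>4/3 > 1\<close>.\<close>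

definition sobolev_weight :: "nat \<Rightarrow> real" where
  "sobolev_weight n = (1 + real n ^ 2) powr (-2/3)"

lemma sobolev_weight_nonneg: "0 \<le> sobolev_weight n"
  unfolding sobolev_weight_def by simp

lemma summable_sobolev_weight: "summable sobolev_weight"
proof (rule summable_comparison_test'[where N = 1])
  show "summable (\<lambda>n. real n powr (-4/3))" by (simp add: summable_real_powr_iff)
next
  fix n :: nat assume "1 \<le> n"
  then have "(1 + real n ^ 2) powr (-2/3) \<le> (real n powr 2) powr (-2/3)"
    by (intro powr_mono2') auto
  also have "\<dots> = real n powr (-4/3)"
    by (simp only: powr_powr) simp
  finally show "norm (sobolev_weight n) \<le> real n powr (-4/3)" unfolding sobolev_weight_def by simp
qed

lemma sum_sobolev_weight_inj_le:
  assumes "finite S" "inj_on h S"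
  shows "(\<Sum>t\<in>S. sobolev_weight (h t)) \<le> suminf sobolev_weight"
  using sum_le_suminf[OF summable_sobolev_weight, of "h ` S"] assms sobolev_weight_nonneg
  by (simp add: sum.reindex)

lemma sum_diff2_symbol_powr_le:
  assumes "N > 0"
  shows "(\<Sum>t\<in>{1..int N}. (1 + diff2_symbol N t) powr (-2/3)) \<le> 2 * suminf sobolev_weight"
proof -
  have "(\<Sum>t\<in>{1..int N}. (1 + diff2_symbol N t) powr (-2/3))
          \<le> (\<Sum>t\<in>{1..int N}. sobolev_weight (nat t) + sobolev_weight (nat (int N - t)))"
  proof (rule sum_mono)
    fix t assume t: "t \<in> {1..int N}"
    define d where "d = min t (int N - t)"
    have "(1 + diff2_symbol N t) powr (-2/3) \<le> (1 + (real_of_int d)\<^sup>2) powr (-2/3)"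
      by (rule powr_mono2') (use diff2_symbol_ge[OF assms t] d_def in \<open>auto simp: add_pos_nonneg\<close>)
    also have "\<dots> = sobolev_weight (nat d)"
      unfolding sobolev_weight_def using t by (simp add: d_def)
    also have "\<dots> \<le> sobolev_weight (nat t) + sobolev_weight (nat (int N - t))"
      using sobolev_weight_nonneg unfolding d_def by (auto simp: min_def add_increasing add_increasing2)
    finally show "(1 + diff2_symbol N t) powr (-2/3) \<le> sobolev_weight (nat t) + sobolev_weight (nat (int N - t))" .
  qed
  also have "\<dots> \<le> suminf sobolev_weight + suminf sobolev_weight"
    unfolding sum.distrib by (intro add_mono sum_sobolev_weight_inj_le) (auto simp: inj_on_def)
  finally show ?thesis by simp
qed

lemma inverse_sq_le_prod_powr:
  fixes x y z :: real
  assumes "0 \<le> x" "0 \<le> y" "0 \<le> z"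
  shows "1 / (1 + (x + y + z))\<^sup>2 \<le> (1 + x) powr (-2/3) * (1 + y) powr (-2/3) * (1 + z) powr (-2/3)"
proof -
  define s where "s = 1 + (x + y + z)"
  have "(1 + x) * (1 + y) * (1 + z) \<le> s * s * s"
    unfolding s_def using assms by (intro mult_mono) auto
  then have "(s ^ 3) powr (-2/3) \<le> ((1 + x) * (1 + y) * (1 + z)) powr (-2/3)"
    using assms by (intro powr_mono2') (auto simp: power3_eq_cube)
  moreover have "(s ^ 3) powr (-2/3) = 1 / s\<^sup>2"
  proof -
    have "0 < s" using assms unfolding s_def by simp
    then have "(s ^ 3) powr (-2/3) = (s powr 3) powr (-2/3)" by simp
    also have "\<dots> = s powr (- 2)" by (simp add: powr_powr)
    also have "\<dots> = inverse (s powr 2)" by (rule powr_minus)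
    also have "\<dots> = 1 / s\<^sup>2" using \<open>0 < s\<close> by (simp add: divide_inverse)
    finally show ?thesis .
  qed
  ultimately show ?thesis
    unfolding s_def using assms by (simp add: powr_mult)
qed

lemma sum_inverse_sq_lap_symbol_le:
  assumes "N > 0"
  shows "(\<Sum>k\<in>grid_box N. 1 / (1 + lap_symbol N k)\<^sup>2) \<le> (2 * suminf sobolev_weight) ^ 3"
proof -
  let ?w = "\<lambda>t. (1 + diff2_symbol N t) powr (-2/3)"
  have "(\<Sum>k\<in>grid_box N. 1 / (1 + lap_symbol N k)\<^sup>2) \<le> grid_sum N (\<lambda>a b c. ?w a * ?w b * ?w c)"
    unfolding grid_sum_box lap_symbol_def split_def
    by (intro sum_mono inverse_sq_le_prod_powr diff2_symbol_nonneg)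
  also have "\<dots> = (\<Sum>t\<in>{1..int N}. ?w t) ^ 3"
    unfolding grid_sum_product by (simp add: power3_eq_cube)
  also have "\<dots> \<le> (2 * suminf sobolev_weight) ^ 3"
    by (rule power_mono[OF sum_diff2_symbol_powr_le[OF assms]]) (simp add: sum_nonneg)
  finally show ?thesis .
qed

lemma sum_one_plus_lap_symbol_sq_le:
  assumes "grid_periodic N f" "N > 0"
  shows "(\<Sum>k\<in>grid_box N. ((1 + lap_symbol N k) * cmod (dft N f k))\<^sup>2) \<le> 2 * (norm2 N f + norm2 N (lap N f))\<^sup>2"
proof -
  have "(\<Sum>k\<in>grid_box N. ((1 + lap_symbol N k) * cmod (dft N f k))\<^sup>2) \<le>
        (\<Sum>k\<in>grid_box N. 2 * (cmod (dft N f k))\<^sup>2 + 2 * ((- lap_symbol N k)\<^sup>2 * (cmod (dft N f k))\<^sup>2))"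
  proof (rule sum_mono)
    fix k
    have "(1 + lap_symbol N k)\<^sup>2 \<le> 2 + 2 * (lap_symbol N k)\<^sup>2"
      using sum_squares_ge_zero[of "1 - lap_symbol N k" 0] by (simp add: power2_eq_square algebra_simps)
    then have "(1 + lap_symbol N k)\<^sup>2 * (cmod (dft N f k))\<^sup>2 \<le> (2 + 2 * (lap_symbol N k)\<^sup>2) * (cmod (dft N f k))\<^sup>2"
      by (rule mult_right_mono) simp
    then show "((1 + lap_symbol N k) * cmod (dft N f k))\<^sup>2
            \<le> 2 * (cmod (dft N f k))\<^sup>2 + 2 * ((- lap_symbol N k)\<^sup>2 * (cmod (dft N f k))\<^sup>2)"
      by (simp only: power_mult_distrib power2_minus) (simp only: distrib_right mult.assoc)
  qed
  also have "\<dots> = 2 * (sum_sq N f / real N ^ 3) + 2 * (sum_sq N (lap N f) / real N ^ 3)"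
    using sum_sq_eq_multiplier[OF assms(2), of "lap N f" "\<lambda>k. - lap_symbol N k" f] parseval[OF assms(2), of f]
    by (simp add: dft_lap[OF assms] sum.distrib sum_distrib_left[symmetric])
  also have "\<dots> = 2 * ((norm2 N f)\<^sup>2 + (norm2 N (lap N f))\<^sup>2)"
    by (simp add: norm2_power2)
  also have "\<dots> \<le> 2 * (norm2 N f + norm2 N (lap N f))\<^sup>2"
    using norm2_nonneg[of N f] norm2_nonneg[of N "lap N f"] by (simp add: power2_eq_square algebra_simps)
  finally show ?thesis .
qed

definition sobolev_const :: real where
  "sobolev_const = sqrt 2 * sqrt ((2 * suminf sobolev_weight) ^ 3)"

lemma sobolev_const_nonneg: "0 \<le> sobolev_const"
  unfolding sobolev_const_def
  using suminf_nonneg[OF summable_sobolev_weight sobolev_weight_nonneg] by simp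

lemma norm_le_sobolev:
  assumes "grid_periodic N f" "N > 0"
  shows "cmod (f i j l) \<le> sobolev_const * (norm2 N f + norm2 N (lap N f))"
proof -
  obtain i' j' l' where box: "(i', j', l') \<in> grid_box N" and "f i j l = f i' j' l'"
    using grid_periodic_reduce[OF assms] .
  have cancel: "((1 + lap_symbol N k) * c) * (1 / (1 + lap_symbol N k)) = c" for k c
    using lap_symbol_nonneg[of N k] by simp
  have "cmod (f i j l) = cmod (\<Sum>k\<in>grid_box N. dft N f k * fourier_char N k (i', j', l'))"
    using dft_inversion[OF assms(2) box] \<open>f i j l = f i' j' l'\<close> by simp
  also have "\<dots> \<le> (\<Sum>k\<in>grid_box N. cmod (dft N f k))"
    by (rule order_trans[OF norm_sum]) (simp add: norm_mult)
  also have "\<dots> = (\<Sum>k\<in>grid_box N. ((1 + lap_symbol N k) * cmod (dft N f k)) * (1 / (1 + lap_symbol N k)))"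
    by (intro sum.cong refl) (rule cancel[symmetric])
  also have "\<dots> \<le> sqrt (\<Sum>k\<in>grid_box N. ((1 + lap_symbol N k) * cmod (dft N f k))\<^sup>2)
                   * sqrt (\<Sum>k\<in>grid_box N. (1 / (1 + lap_symbol N k))\<^sup>2)"
    unfolding L2_set_def[symmetric]
    by (rule order_trans[OF sum_mono L2_set_mult_ineq]) (metis abs_ge_self abs_mult)
  also have "\<dots> \<le> sqrt (2 * (norm2 N f + norm2 N (lap N f))\<^sup>2) * sqrt ((2 * suminf sobolev_weight) ^ 3)"
    using sum_one_plus_lap_symbol_sq_le[OF assms] sum_inverse_sq_lap_symbol_le[OF assms(2)]
    by (intro mult_mono real_sqrt_le_mono) (auto simp: power_divide sum_nonneg)
  also have "\<dots> = sobolev_const * (norm2 N f + norm2 N (lap N f))"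
    unfolding sobolev_const_def using norm2_nonneg[of N f] norm2_nonneg[of N "lap N f"]
    by (simp add: real_sqrt_mult mult_ac)
  finally show ?thesis .
qed

section \<open>The Laplacian of a product\<close>

definition fwd_diff :: "nat \<Rightarrow> int \<Rightarrow> int \<Rightarrow> int \<Rightarrow> grid \<Rightarrow> grid" where
  "fwd_diff N a b c f = (\<lambda>i j l. of_nat N * (f (i + a) (j + b) (l + c) - f i j l))"

lemma grid_periodic_fwd_diff:
  assumes "grid_periodic N f"
  shows "grid_periodic N (fwd_diff N a b c f)"
  using grid_periodic_comp2[OF grid_periodic_shift[OF assms, of a b c] assms, of "\<lambda>x y. of_nat N * (x - y)"]
  unfolding fwd_diff_def .

lemma fwd_diff_sub_shift_eq_diff2:
  "of_nat N * (fwd_diff N a b c f i j l - fwd_diff N a b c f (i - a) (j - b) (l - c)) = diff2 N a b c f i j l"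
  unfolding fwd_diff_def diff2_def by (simp add: algebra_simps power2_eq_square)

lemma grid_sum_by_parts:
  assumes "grid_periodic N g" "grid_periodic N w"
  shows "grid_sum N (\<lambda>i j l. cnj (fwd_diff N a b c g i j l) * w i j l)
           = grid_sum N (\<lambda>i j l. cnj (g i j l) * (of_nat N * (w (i - a) (j - b) (l - c) - w i j l)))"
proof -
  define G where "G i j l = cnj (g i j l) * w (i - a) (j - b) (l - c)" for i j l
  have "grid_periodic N G"
    unfolding G_def using grid_periodic_comp2[OF assms(1) grid_periodic_shift[OF assms(2), of "- a" "- b" "- c"]]
    by simp
  have "grid_sum N (\<lambda>i j l. cnj (fwd_diff N a b c g i j l) * w i j l)
          = of_nat N * grid_sum N (\<lambda>i j l. cnj (g (i + a) (j + b) (l + c)) * w i j l)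
            - of_nat N * grid_sum N (\<lambda>i j l. cnj (g i j l) * w i j l)"
    unfolding fwd_diff_def grid_sum_mult_left[symmetric] grid_sum_diff[symmetric]
    by (rule grid_sum_cong) (simp add: algebra_simps)
  also have "grid_sum N (\<lambda>i j l. cnj (g (i + a) (j + b) (l + c)) * w i j l) = grid_sum N G"
    using grid_sum_periodic_shift[OF \<open>grid_periodic N G\<close>, of a b c] unfolding G_def by simp
  also have "of_nat N * grid_sum N G - of_nat N * grid_sum N (\<lambda>i j l. cnj (g i j l) * w i j l)
               = grid_sum N (\<lambda>i j l. cnj (g i j l) * (of_nat N * (w (i - a) (j - b) (l - c) - w i j l)))"
    unfolding G_def grid_sum_mult_left[symmetric] grid_sum_diff[symmetric]
    by (rule grid_sum_cong) (simp add: algebra_simps)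
  finally show ?thesis .
qed

lemma norm_cubic_diff_le:
  "cmod (z * of_real ((cmod z)\<^sup>2) - u * of_real ((cmod u)\<^sup>2)) \<le> cmod (z - u) * (3/2 * ((cmod z)\<^sup>2 + (cmod u)\<^sup>2))"
proof -
  define a b d where "a = cmod z" and "b = cmod u" and "d = cmod (z - u)"
  have nonneg: "0 \<le> a" "0 \<le> b" "0 \<le> d" unfolding a_def b_def d_def by auto
  have "z * of_real ((cmod z)\<^sup>2) - u * of_real ((cmod u)\<^sup>2) = (z - u) * of_real (a\<^sup>2) + u * of_real (a\<^sup>2 - b\<^sup>2)"
    unfolding a_def b_def by (simp add: algebra_simps)
  moreover have "cmod ((z - u) * of_real (a\<^sup>2)) = d * a\<^sup>2"
    by (simp only: norm_mult norm_of_real d_def) simp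
  moreover have "cmod (u * of_real (a\<^sup>2 - b\<^sup>2)) = b * \<bar>a\<^sup>2 - b\<^sup>2\<bar>"
    by (simp only: norm_mult norm_of_real b_def)
  ultimately have "cmod (z * of_real ((cmod z)\<^sup>2) - u * of_real ((cmod u)\<^sup>2)) \<le> d * a\<^sup>2 + b * \<bar>a\<^sup>2 - b\<^sup>2\<bar>"
    using norm_triangle_ineq[of "(z - u) * of_real (a\<^sup>2)" "u * of_real (a\<^sup>2 - b\<^sup>2)"] by simp
  also have "\<dots> \<le> d * a\<^sup>2 + b * (d * (a + b))"
  proof -
    have "\<bar>a - b\<bar> \<le> d" unfolding a_def b_def d_def by (rule norm_triangle_ineq3)
    moreover have "\<bar>a\<^sup>2 - b\<^sup>2\<bar> = \<bar>a - b\<bar> * (a + b)"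
      using nonneg by (simp add: power2_eq_square square_diff_square_factored abs_mult)
    ultimately have "\<bar>a\<^sup>2 - b\<^sup>2\<bar> \<le> d * (a + b)"
      using nonneg by (simp add: mult_right_mono)
    then show ?thesis using nonneg by (simp add: mult_left_mono)
  qed
  also have "\<dots> \<le> d * (3/2 * (a\<^sup>2 + b\<^sup>2))"
  proof -
    have "a * b \<le> (a\<^sup>2 + b\<^sup>2) / 2" using sum_squares_ge_zero[of "a - b" 0] by (simp add: power2_eq_square algebra_simps)
    then have "a\<^sup>2 + b * (a + b) \<le> 3/2 * (a\<^sup>2 + b\<^sup>2)" by (simp add: algebra_simps power2_eq_square)
    from mult_left_mono[OF this nonneg(3)] show ?thesis by (simp add: algebra_simps)
  qed
  finally show ?thesis unfolding a_def b_def d_def .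
qed

definition cubic :: "grid \<Rightarrow> grid" where
  "cubic f = (\<lambda>i j l. f i j l * of_real ((cmod (f i j l))\<^sup>2))"

lemma cnj_mult_cubic: "cnj (f i j l) * cubic f i j l = of_real ((cmod (f i j l)) ^ 4)"
proof -
  have "cnj (f i j l) * cubic f i j l = (f i j l * cnj (f i j l)) * of_real ((cmod (f i j l))\<^sup>2)"
    unfolding cubic_def by (simp only: ac_simps)
  also have "\<dots> = of_real ((cmod (f i j l))\<^sup>2 * (cmod (f i j l))\<^sup>2)"
    by (simp only: complex_norm_square[symmetric] of_real_mult)
  finally show ?thesis by (simp add: power2_eq_square power4_eq_xxxx)
qed

lemma sum_fourth_power_fwd_diff_by_parts:
  assumes "grid_periodic N f"
  shows "complex_of_real (grid_sum N (\<lambda>i j l. (cmod (fwd_diff N a b c f i j l)) ^ 4))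
           = grid_sum N (\<lambda>i j l. cnj (f i j l)
               * (of_nat N * (cubic (fwd_diff N a b c f) (i - a) (j - b) (l - c) - cubic (fwd_diff N a b c f) i j l)))"
proof -
  have "grid_periodic N (cubic (fwd_diff N a b c f))"
    unfolding cubic_def by (rule grid_periodic_comp[OF grid_periodic_fwd_diff[OF assms]])
  then show ?thesis
    unfolding grid_sum_of_real[symmetric] cnj_mult_cubic[symmetric]
    by (rule grid_sum_by_parts[OF assms])
qed

lemma norm_bwd_diff_cubic_fwd_diff_le:
  "cmod (of_nat N * (cubic (fwd_diff N a b c f) (i - a) (j - b) (l - c) - cubic (fwd_diff N a b c f) i j l))
     \<le> cmod (diff2 N a b c f i j l) * (3/2 * ((cmod (fwd_diff N a b c f i j l))\<^sup>2
                                          + (cmod (fwd_diff N a b c f (i - a) (j - b) (l - c)))\<^sup>2))"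
proof -
  let ?A = "fwd_diff N a b c f i j l" and ?A' = "fwd_diff N a b c f (i - a) (j - b) (l - c)"
  have "cmod (of_nat N * (cubic (fwd_diff N a b c f) (i - a) (j - b) (l - c) - cubic (fwd_diff N a b c f) i j l))
          = real N * cmod (?A * of_real ((cmod ?A)\<^sup>2) - ?A' * of_real ((cmod ?A')\<^sup>2))"
    unfolding cubic_def by (simp add: norm_mult norm_minus_commute)
  also have "\<dots> \<le> real N * (cmod (?A - ?A') * (3/2 * ((cmod ?A)\<^sup>2 + (cmod ?A')\<^sup>2)))"
    by (rule mult_left_mono[OF norm_cubic_diff_le]) simp
  also have "\<dots> = cmod (diff2 N a b c f i j l) * (3/2 * ((cmod ?A)\<^sup>2 + (cmod ?A')\<^sup>2))"
    unfolding fwd_diff_sub_shift_eq_diff2[symmetric] by (simp add: norm_mult)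
  finally show ?thesis .
qed

lemma sum_fourth_power_fwd_diff_le_sqrt:
  assumes "grid_periodic N f" "\<And>i j l. cmod (f i j l) \<le> M"
  shows "grid_sum N (\<lambda>i j l. (cmod (fwd_diff N a b c f i j l)) ^ 4)
           \<le> 3 * M * sqrt (sum_sq N (diff2 N a b c f)) * sqrt (grid_sum N (\<lambda>i j l. (cmod (fwd_diff N a b c f i j l)) ^ 4))"
proof -
  define A where "A = fwd_diff N a b c f"
  define D where "D = diff2 N a b c f"
  define S where "S = grid_sum N (\<lambda>i j l. (cmod (A i j l)) ^ 4)"
  have "0 \<le> M" using assms(2) by (rule norm_bound_nonneg)
  have "0 \<le> S" unfolding S_def by (rule grid_sum_nonneg) simp
  have "S = cmod (complex_of_real S)" using \<open>0 \<le> S\<close> by simp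
  also have "\<dots> \<le> grid_sum N (\<lambda>i j l. cmod (cnj (f i j l) * (of_nat N * (cubic A (i - a) (j - b) (l - c) - cubic A i j l))))"
    unfolding S_def A_def sum_fourth_power_fwd_diff_by_parts[OF assms(1)] by (rule norm_grid_sum_le)
  also have "\<dots> \<le> grid_sum N (\<lambda>i j l. M * (cmod (D i j l) * (3/2 * ((cmod (A i j l))\<^sup>2 + (cmod (A (i - a) (j - b) (l - c)))\<^sup>2))))"
    unfolding norm_mult complex_mod_cnj A_def D_def
    by (intro grid_sum_mono mult_mono[OF assms(2) norm_bwd_diff_cubic_fwd_diff_le[unfolded norm_mult] \<open>0 \<le> M\<close>]) simp
  also have "\<dots> = 3/2 * M * (grid_sum N (\<lambda>i j l. cmod (D i j l) * (cmod (A i j l))\<^sup>2) +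
                              grid_sum N (\<lambda>i j l. cmod (D i j l) * (cmod (A (i - a) (j - b) (l - c)))\<^sup>2))"
    unfolding grid_sum_add[symmetric] grid_sum_mult_left[symmetric] by (rule grid_sum_cong) (simp add: algebra_simps)
  also have "\<dots> \<le> 3/2 * M * (sqrt (sum_sq N D) * sqrt S + sqrt (sum_sq N D) * sqrt S)"
  proof (intro mult_left_mono add_mono)
    have "grid_periodic N A" unfolding A_def by (rule grid_periodic_fwd_diff[OF assms(1)])
    have "grid_sum N (\<lambda>i j l. (cmod (A (i + - a) (j + - b) (l + - c))) ^ 4) = S"
      unfolding S_def by (rule grid_sum_periodic_shift[OF grid_periodic_comp[OF \<open>grid_periodic N A\<close>]])
    then have shifted: "grid_sum N (\<lambda>i j l. ((cmod (A (i - a) (j - b) (l - c)))\<^sup>2)\<^sup>2) = S"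
      by simp
    show "grid_sum N (\<lambda>i j l. cmod (D i j l) * (cmod (A i j l))\<^sup>2) \<le> sqrt (sum_sq N D) * sqrt S"
      using grid_sum_Cauchy_Schwarz[of N "\<lambda>i j l. cmod (D i j l)" "\<lambda>i j l. (cmod (A i j l))\<^sup>2"]
      unfolding sum_sq_def S_def by simp
    show "grid_sum N (\<lambda>i j l. cmod (D i j l) * (cmod (A (i - a) (j - b) (l - c)))\<^sup>2) \<le> sqrt (sum_sq N D) * sqrt S"
      using grid_sum_Cauchy_Schwarz[of N "\<lambda>i j l. cmod (D i j l)" "\<lambda>i j l. (cmod (A (i - a) (j - b) (l - c)))\<^sup>2"]
      unfolding sum_sq_def shifted by simp
  qed (use \<open>0 \<le> M\<close> in simp)
  finally show ?thesis unfolding S_def A_def D_def by (simp add: algebra_simps)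
qed

lemma sqrt_sum_fourth_power_fwd_diff_le:
  assumes "grid_periodic N f" "\<And>i j l. cmod (f i j l) \<le> M"
  shows "sqrt (grid_sum N (\<lambda>i j l. (cmod (fwd_diff N a b c f i j l)) ^ 4)) \<le> 3 * M * sqrt (sum_sq N (diff2 N a b c f))"
proof -
  define S where "S = grid_sum N (\<lambda>i j l. (cmod (fwd_diff N a b c f i j l)) ^ 4)"
  have "0 \<le> M" using assms(2) by (rule norm_bound_nonneg)
  define K where "K = 3 * M * sqrt (sum_sq N (diff2 N a b c f))"
  have "0 \<le> K" unfolding K_def using \<open>0 \<le> M\<close> sum_sq_nonneg by simp
  have "0 \<le> S" unfolding S_def by (rule grid_sum_nonneg) simp
  then have "sqrt S * sqrt S \<le> K * sqrt S"
    using sum_fourth_power_fwd_diff_le_sqrt[OF assms, of a b c] unfolding S_def K_def by simp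
  have "sqrt S \<le> K"
  proof (cases "S = 0")
    case False
    with \<open>0 \<le> S\<close> have "0 < sqrt S" by simp
    with \<open>sqrt S * sqrt S \<le> K * sqrt S\<close> show ?thesis by (rule mult_right_le_imp_le)
  qed (simp add: \<open>0 \<le> K\<close>)
  then show ?thesis unfolding S_def K_def .
qed

lemma norm2_fwd_diff_mult_sq_le:
  assumes "grid_periodic N u" "grid_periodic N v" "N > 0" "(a, b, c) \<in> {(1, 0, 0), (0, 1, 0), (0, 0, 1)}"
    and "\<And>i j l. cmod (u i j l) \<le> M" "\<And>i j l. cmod (v i j l) \<le> E"
  shows "(norm2 N (\<lambda>i j l. fwd_diff N a b c u i j l * fwd_diff N a b c v i j l))\<^sup>2
           \<le> 9 * (M * norm2 N (lap N u)) * (E * norm2 N (lap N v))"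
proof -
  let ?Du = "fwd_diff N a b c u" and ?Dv = "fwd_diff N a b c v"
  have "0 \<le> M" "0 \<le> E" using norm_bound_nonneg assms(5,6) by blast+
  have "sum_sq N (\<lambda>i j l. ?Du i j l * ?Dv i j l) = grid_sum N (\<lambda>i j l. (cmod (?Du i j l))\<^sup>2 * (cmod (?Dv i j l))\<^sup>2)"
    unfolding sum_sq_def by (simp add: norm_mult power_mult_distrib)
  also have "\<dots> \<le> sqrt (grid_sum N (\<lambda>i j l. (cmod (?Du i j l)) ^ 4)) * sqrt (grid_sum N (\<lambda>i j l. (cmod (?Dv i j l)) ^ 4))"
    using grid_sum_Cauchy_Schwarz[of N "\<lambda>i j l. (cmod (?Du i j l))\<^sup>2" "\<lambda>i j l. (cmod (?Dv i j l))\<^sup>2"]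
    by (simp flip: power_mult)
  also have "\<dots> \<le> (3 * M * sqrt (sum_sq N (diff2 N a b c u))) * (3 * E * sqrt (sum_sq N (diff2 N a b c v)))"
    by (intro mult_mono sqrt_sum_fourth_power_fwd_diff_le assms)
       (use \<open>0 \<le> M\<close> in \<open>simp_all add: sum_sq_nonneg grid_sum_nonneg\<close>)
  also have "\<dots> \<le> (3 * M * sqrt (sum_sq N (lap N u))) * (3 * E * sqrt (sum_sq N (lap N v)))"
    using \<open>0 \<le> M\<close> \<open>0 \<le> E\<close> sum_sq_diff2_le_lap[OF assms(1,3,4)] sum_sq_diff2_le_lap[OF assms(2,3,4)]
    by (intro mult_mono mult_left_mono real_sqrt_le_mono) (simp_all add: sum_sq_nonneg)
  finally have "sum_sq N (\<lambda>i j l. ?Du i j l * ?Dv i j l) / real N ^ 3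
                  \<le> 9 * M * E * (sqrt (sum_sq N (lap N u)) * sqrt (sum_sq N (lap N v)) / real N ^ 3)"
    by (simp add: divide_right_mono algebra_simps)
  moreover have "sqrt (sum_sq N (lap N u)) * sqrt (sum_sq N (lap N v)) / real N ^ 3
                   = norm2 N (lap N u) * norm2 N (lap N v)"
    unfolding norm2_eq_sum_sq by (simp add: real_sqrt_divide)
  ultimately show ?thesis
    unfolding norm2_power2 by (simp add: algebra_simps)
qed

definition cross_term :: "nat \<Rightarrow> int \<Rightarrow> int \<Rightarrow> int \<Rightarrow> grid \<Rightarrow> grid \<Rightarrow> grid" where
  "cross_term N a b c u v = (\<lambda>i j l. fwd_diff N a b c u i j l * fwd_diff N a b c v i j l
       + fwd_diff N a b c u (i - a) (j - b) (l - c) * fwd_diff N a b c v (i - a) (j - b) (l - c))"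

lemma lap_mult:
  "lap N (\<lambda>i j l. u i j l * v i j l) = (\<lambda>i j l. u i j l * lap N v i j l + v i j l * lap N u i j l
      + cross_term N 1 0 0 u v i j l + cross_term N 0 1 0 u v i j l + cross_term N 0 0 1 u v i j l)"
  unfolding lap_eq_sum_diff2 diff2_def cross_term_def fwd_diff_def
  by (intro ext) (simp add: algebra_simps power2_eq_square)

lemma norm2_cross_term_le:
  assumes "grid_periodic N u" "grid_periodic N v" "N > 0" "(a, b, c) \<in> {(1, 0, 0), (0, 1, 0), (0, 0, 1)}"
    and "\<And>i j l. cmod (u i j l) \<le> M" "\<And>i j l. cmod (v i j l) \<le> E" "norm2 N (lap N u) \<le> L"
  shows "norm2 N (cross_term N a b c u v) \<le> 3 * sqrt (M * L) * (E + norm2 N (lap N v))"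
proof -
  define P where "P i j l = fwd_diff N a b c u i j l * fwd_diff N a b c v i j l" for i j l
  have "0 \<le> M" "0 \<le> E" using norm_bound_nonneg assms(5,6) by blast+
  have "0 \<le> L" using assms(7) norm2_nonneg order_trans by blast
  have "grid_periodic N P"
    using grid_periodic_comp2[OF grid_periodic_fwd_diff[OF assms(1)] grid_periodic_fwd_diff[OF assms(2)],
        of "\<lambda>x y. x * y"]
    unfolding P_def by simp
  have "norm2 N (cross_term N a b c u v) \<le> norm2 N P + norm2 N (\<lambda>i j l. P (i + - a) (j + - b) (l + - c))"
    unfolding cross_term_def P_def[symmetric] by (simp add: norm2_triangle)
  also have "\<dots> = 2 * norm2 N P"
    using norm2_periodic_shift[OF \<open>grid_periodic N P\<close>, of "- a" "- b" "- c"] by simp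
  also have "norm2 N P \<le> sqrt (9 * (M * L) * (E * norm2 N (lap N v)))"
  proof (rule real_le_rsqrt)
    have "(norm2 N P)\<^sup>2 \<le> 9 * (M * norm2 N (lap N u)) * (E * norm2 N (lap N v))"
      unfolding P_def by (rule norm2_fwd_diff_mult_sq_le[OF assms(1-6)])
    also have "\<dots> \<le> 9 * (M * L) * (E * norm2 N (lap N v))"
      using assms(7) \<open>0 \<le> M\<close> \<open>0 \<le> E\<close> norm2_nonneg[of N "lap N v"]
      by (intro mult_right_mono mult_left_mono) simp_all
    finally show "(norm2 N P)\<^sup>2 \<le> 9 * (M * L) * (E * norm2 N (lap N v))" .
  qed
  also have "sqrt (9 * (M * L) * (E * norm2 N (lap N v))) = 3 * sqrt (M * L) * sqrt (E * norm2 N (lap N v))"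
    by (simp add: real_sqrt_mult)
  also have "\<dots> \<le> 3 * sqrt (M * L) * ((E + norm2 N (lap N v)) / 2)"
    using \<open>0 \<le> M\<close> \<open>0 \<le> L\<close>
    by (intro mult_left_mono[OF arith_geo_mean_sqrt[OF \<open>0 \<le> E\<close> norm2_nonneg]]) simp
  finally show ?thesis by simp
qed

definition product_const :: "real \<Rightarrow> real \<Rightarrow> real" where
  "product_const M L = M + L + 9 * sqrt (M * L)"

lemma product_const_nonneg: "0 \<le> M \<Longrightarrow> 0 \<le> L \<Longrightarrow> 0 \<le> product_const M L"
  unfolding product_const_def by simp

lemma product_const_pos: "0 < M \<Longrightarrow> 0 \<le> L \<Longrightarrow> 0 < product_const M L"
  unfolding product_const_def by (simp add: add_pos_nonneg)

lemma norm2_lap_mult_le: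
  assumes "grid_periodic N u" "grid_periodic N v" "N > 0"
    and "\<And>i j l. cmod (u i j l) \<le> M" "norm2 N (lap N u) \<le> L" "\<And>i j l. cmod (v i j l) \<le> E"
  shows "norm2 N (lap N (\<lambda>i j l. u i j l * v i j l)) \<le> product_const M L * (E + norm2 N (lap N v))"
proof -
  define l where "l = norm2 N (lap N v)"
  have "0 \<le> M" "0 \<le> E" using norm_bound_nonneg assms(4,6) by blast+
  have "0 \<le> L" "0 \<le> l" using assms(5) norm2_nonneg order_trans unfolding l_def by blast+
  have cross: "norm2 N (cross_term N a b c u v) \<le> 3 * sqrt (M * L) * (E + l)"
    if "(a, b, c) \<in> {(1, 0, 0), (0, 1, 0), (0, 0, 1)}" for a b c
    unfolding l_def using assms(5) by (rule norm2_cross_term_le[OF assms(1-3) that assms(4,6)])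
  have uv: "norm2 N (\<lambda>i j l. u i j l * lap N v i j l) \<le> M * l"
    unfolding l_def by (rule norm2_le_pointwise) (use assms(4) \<open>0 \<le> M\<close> in \<open>auto simp: norm_mult intro: mult_right_mono\<close>)
  have vu: "norm2 N (\<lambda>i j l. v i j l * lap N u i j l) \<le> E * L"
  proof -
    have "norm2 N (\<lambda>i j l. v i j l * lap N u i j l) \<le> E * norm2 N (lap N u)"
      by (rule norm2_le_pointwise) (use assms(6) \<open>0 \<le> E\<close> in \<open>auto simp: norm_mult intro: mult_right_mono\<close>)
    also have "\<dots> \<le> E * L" by (rule mult_left_mono[OF assms(5) \<open>0 \<le> E\<close>])
    finally show ?thesis .
  qed
  have "norm2 N (lap N (\<lambda>i j l. u i j l * v i j l))
          \<le> M * l + E * L + 3 * sqrt (M * L) * (E + l) + 3 * sqrt (M * L) * (E + l) + 3 * sqrt (M * L) * (E + l)"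
    unfolding lap_mult
    by (rule order_trans[OF norm2_triangle] add_mono uv vu cross[of 1 0 0] cross[of 0 1 0] cross[of 0 0 1]
          | simp)+
  also have "\<dots> \<le> product_const M L * (E + l)"
    unfolding product_const_def using \<open>0 \<le> M\<close> \<open>0 \<le> E\<close> \<open>0 \<le> L\<close> \<open>0 \<le> l\<close>
    by (simp add: algebra_simps mult_left_mono add_mono)
  finally show ?thesis unfolding l_def .
qed

lemma norm2_lap_mult_le_uniform:
  assumes "N > 0" "grid_periodic N u" "grid_periodic N v"
    and "\<And>i j l. cmod (u i j l) \<le> c" "norm2 N (lap N u) \<le> c"
    and "\<And>i j l. cmod (v i j l) \<le> c" "norm2 N (lap N v) \<le> c"
  shows "norm2 N (lap N (\<lambda>i j l. u i j l * v i j l)) \<le> 2 * c * product_const c c"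
proof -
  have "0 \<le> c" using assms(4) by (rule norm_bound_nonneg)
  have "norm2 N (lap N (\<lambda>i j l. u i j l * v i j l)) \<le> product_const c c * (c + norm2 N (lap N v))"
    by (rule norm2_lap_mult_le[OF assms(2,3,1,4,5,6)])
  also have "\<dots> \<le> product_const c c * (c + c)"
    using assms(7) product_const_nonneg[OF \<open>0 \<le> c\<close> \<open>0 \<le> c\<close>] by (intro mult_left_mono) simp_all
  finally show ?thesis by (simp add: algebra_simps)
qed

lemma norm2_lap_mult_add_mult_cnj_le:
  assumes "N > 0" "grid_periodic N A" "grid_periodic N B" "grid_periodic N e"
    and "\<And>i j l. cmod (A i j l) \<le> M" "norm2 N (lap N A) \<le> L"
    and "\<And>i j l. cmod (B i j l) \<le> M" "norm2 N (lap N B) \<le> L"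
    and "\<And>i j l. cmod (e i j l) \<le> E"
  shows "norm2 N (lap N (\<lambda>i j l. A i j l * e i j l + B i j l * cnj (e i j l)))
           \<le> 2 * product_const M L * (E + norm2 N (lap N e))"
proof -
  have "norm2 N (lap N (\<lambda>i j l. A i j l * e i j l)) \<le> product_const M L * (E + norm2 N (lap N e))"
    by (rule norm2_lap_mult_le[OF assms(2,4,1,5,6,9)])
  moreover have "norm2 N (lap N (\<lambda>i j l. B i j l * cnj (e i j l)))
                   \<le> product_const M L * (E + norm2 N (lap N (\<lambda>i j l. cnj (e i j l))))"
    using assms(9) by (intro norm2_lap_mult_le[OF assms(3) grid_periodic_comp[OF assms(4)] assms(1,7,8)]) simp
  ultimately show ?thesis
    using norm2_triangle[of N "lap N (\<lambda>i j l. A i j l * e i j l)" "lap N (\<lambda>i j l. B i j l * cnj (e i j l))"]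
    by (simp add: lap_add lap_cnj norm2_cnj)
qed

section \<open>The nonlinear error term\<close>

lemma NLE_eq:
  "NLE \<Phi> \<phi> = (\<lambda>i j l. (cnj (\<phi> i j l) * \<phi> i j l + cnj (\<Phi> i j l) * \<Phi> i j l) * (\<Phi> i j l - \<phi> i j l)
                        + \<phi> i j l * \<Phi> i j l * cnj (\<Phi> i j l - \<phi> i j l))"
proof (intro ext)
  fix i j l
  have "complex_of_real ((cmod (\<phi> i j l))\<^sup>2) = cnj (\<phi> i j l) * \<phi> i j l"
    using complex_norm_square[of "\<phi> i j l"] by (simp add: mult.commute)
  then show "NLE \<Phi> \<phi> i j l = (cnj (\<phi> i j l) * \<phi> i j l + cnj (\<Phi> i j l) * \<Phi> i j l) * (\<Phi> i j l - \<phi> i j l)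
                                + \<phi> i j l * \<Phi> i j l * cnj (\<Phi> i j l - \<phi> i j l)"
    unfolding NLE_def Let_def by (simp add: algebra_simps)
qed

lemma norm2_NLE_le:
  assumes "\<And>i j l. cmod (\<Phi> i j l) \<le> c" "\<And>i j l. cmod (\<phi> i j l) \<le> c"
  shows "norm2 N (NLE \<Phi> \<phi>) \<le> 3 * c\<^sup>2 * norm2 N (\<lambda>i j l. \<Phi> i j l - \<phi> i j l)"
  unfolding NLE_eq
proof (rule norm2_le_pointwise)
  fix i j l
  let ?x = "cmod (\<phi> i j l)" and ?y = "cmod (\<Phi> i j l)" and ?e = "cmod (\<Phi> i j l - \<phi> i j l)"
  have "0 \<le> c" using assms(1) by (rule norm_bound_nonneg)
  have "?x * ?x \<le> c * c" "?y * ?y \<le> c * c" "?x * ?y \<le> c * c"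
    using mult_mono[OF assms(2) assms(2)] mult_mono[OF assms(1) assms(1)] mult_mono[OF assms(2) assms(1)] \<open>0 \<le> c\<close>
    by simp_all
  then have "(?x * ?x + ?y * ?y) * ?e + ?x * ?y * ?e \<le> (c * c + c * c) * ?e + c * c * ?e"
    by (intro add_mono mult_right_mono) simp_all
  also have "\<dots> = 3 * c\<^sup>2 * ?e" by (simp add: power2_eq_square algebra_simps)
  finally have bound: "(?x * ?x + ?y * ?y) * ?e + ?x * ?y * ?e \<le> 3 * c\<^sup>2 * ?e" .
  have "cmod (cnj (\<phi> i j l) * \<phi> i j l + cnj (\<Phi> i j l) * \<Phi> i j l) \<le> ?x * ?x + ?y * ?y"
    using norm_triangle_ineq[of "cnj (\<phi> i j l) * \<phi> i j l" "cnj (\<Phi> i j l) * \<Phi> i j l"] by (simp add: norm_mult)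
  then have "cmod ((cnj (\<phi> i j l) * \<phi> i j l + cnj (\<Phi> i j l) * \<Phi> i j l) * (\<Phi> i j l - \<phi> i j l))
               \<le> (?x * ?x + ?y * ?y) * ?e"
    unfolding norm_mult by (rule mult_right_mono) simp
  moreover have "cmod (\<phi> i j l * \<Phi> i j l * cnj (\<Phi> i j l - \<phi> i j l)) = ?x * ?y * ?e"
    by (simp only: norm_mult complex_mod_cnj)
  ultimately show "cmod ((cnj (\<phi> i j l) * \<phi> i j l + cnj (\<Phi> i j l) * \<Phi> i j l) * (\<Phi> i j l - \<phi> i j l)
                    + \<phi> i j l * \<Phi> i j l * cnj (\<Phi> i j l - \<phi> i j l)) \<le> 3 * c\<^sup>2 * ?e"
    using bound norm_triangle_ineq[of "(cnj (\<phi> i j l) * \<phi> i j l + cnj (\<Phi> i j l) * \<Phi> i j l) * (\<Phi> i j l - \<phi> i j l)"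
        "\<phi> i j l * \<Phi> i j l * cnj (\<Phi> i j l - \<phi> i j l)"]
    by linarith
qed simp

definition nle_lap_const :: "real \<Rightarrow> real" where
  "nle_lap_const c = 2 * product_const (2 * c\<^sup>2) (4 * c * product_const c c) * (sobolev_const + 1)"

lemma nle_lap_const_pos: "0 < c \<Longrightarrow> 0 < nle_lap_const c"
  unfolding nle_lap_const_def
  using sobolev_const_nonneg by (simp add: product_const_pos product_const_nonneg add_pos_nonneg)

lemma norm2_lap_NLE_le:
  assumes "N > 0" "grid_periodic N \<Phi>" "grid_periodic N \<phi>"
    and "\<And>i j l. cmod (\<Phi> i j l) \<le> c" "\<And>i j l. cmod (\<phi> i j l) \<le> c"
    and "norm2 N (lap N \<Phi>) \<le> c" "norm2 N (lap N \<phi>) \<le> c"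
  shows "norm2 N (lap N (NLE \<Phi> \<phi>))
           \<le> nle_lap_const c * (norm2 N (\<lambda>i j l. \<Phi> i j l - \<phi> i j l) + norm2 N (lap N (\<lambda>i j l. \<Phi> i j l - \<phi> i j l)))"
proof -
  define e where "e i j l = \<Phi> i j l - \<phi> i j l" for i j l
  define A where "A i j l = cnj (\<phi> i j l) * \<phi> i j l + cnj (\<Phi> i j l) * \<Phi> i j l" for i j l
  define B where "B i j l = \<phi> i j l * \<Phi> i j l" for i j l
  define L where "L = 4 * c * product_const c c"
  define n where "n = norm2 N e + norm2 N (lap N e)"
  have "0 \<le> c" using assms(4) by (rule norm_bound_nonneg)
  have cnj_bounds: "grid_periodic N (\<lambda>i j l. cnj (f i j l))" "\<And>i j l. cmod (cnj (f i j l)) \<le> c"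
    "norm2 N (lap N (\<lambda>i j l. cnj (f i j l))) \<le> c"
    if "grid_periodic N f" "\<And>i j l. cmod (f i j l) \<le> c" "norm2 N (lap N f) \<le> c" for f
    using that by (simp_all add: grid_periodic_comp lap_cnj norm2_cnj)
  have "grid_periodic N A" "grid_periodic N B" "grid_periodic N e"
    unfolding A_def B_def e_def using assms(2,3) by (simp_all add: grid_periodic_def)
  moreover have "cmod (A i j l) \<le> 2 * c\<^sup>2" "cmod (B i j l) \<le> 2 * c\<^sup>2" for i j l
  proof -
    have "cmod (A i j l) \<le> cmod (\<phi> i j l) * cmod (\<phi> i j l) + cmod (\<Phi> i j l) * cmod (\<Phi> i j l)"
      unfolding A_def using norm_triangle_ineq[of "cnj (\<phi> i j l) * \<phi> i j l" "cnj (\<Phi> i j l) * \<Phi> i j l"]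
      by (simp add: norm_mult)
    moreover have "cmod (\<phi> i j l) * cmod (\<phi> i j l) \<le> c * c" "cmod (\<Phi> i j l) * cmod (\<Phi> i j l) \<le> c * c"
      "cmod (B i j l) \<le> c * c"
      unfolding B_def norm_mult using \<open>0 \<le> c\<close> by (intro mult_mono assms(4,5); simp)+
    ultimately show "cmod (A i j l) \<le> 2 * c\<^sup>2" "cmod (B i j l) \<le> 2 * c\<^sup>2"
      unfolding power2_eq_square using mult_nonneg_nonneg[OF \<open>0 \<le> c\<close> \<open>0 \<le> c\<close>] by linarith+
  qed
  moreover have "norm2 N (lap N A) \<le> L" "norm2 N (lap N B) \<le> L"
  proof -
    note cnj\<phi> = cnj_bounds[OF assms(3,5,7)] and cnj\<Phi> = cnj_bounds[OF assms(2,4,6)]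
    have "norm2 N (lap N (\<lambda>i j l. cnj (\<phi> i j l) * \<phi> i j l)) \<le> 2 * c * product_const c c"
      by (rule norm2_lap_mult_le_uniform[OF assms(1) cnj\<phi>(1) assms(3) cnj\<phi>(2,3) assms(5,7)])
    moreover have "norm2 N (lap N (\<lambda>i j l. cnj (\<Phi> i j l) * \<Phi> i j l)) \<le> 2 * c * product_const c c"
      by (rule norm2_lap_mult_le_uniform[OF assms(1) cnj\<Phi>(1) assms(2) cnj\<Phi>(2,3) assms(4,6)])
    moreover have "norm2 N (lap N B) \<le> 2 * c * product_const c c"
      unfolding B_def by (rule norm2_lap_mult_le_uniform[OF assms(1,3,2,5,7,4,6)])
    moreover have "0 \<le> 2 * c * product_const c c"
      using \<open>0 \<le> c\<close> by (simp add: product_const_nonneg)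
    ultimately show "norm2 N (lap N A) \<le> L" "norm2 N (lap N B) \<le> L"
      unfolding A_def L_def lap_add
      using norm2_triangle[of N "lap N (\<lambda>i j l. cnj (\<phi> i j l) * \<phi> i j l)" "lap N (\<lambda>i j l. cnj (\<Phi> i j l) * \<Phi> i j l)"]
      by linarith+
  qed
  moreover have "cmod (e i j l) \<le> sobolev_const * n" for i j l
    unfolding n_def by (rule norm_le_sobolev[OF \<open>grid_periodic N e\<close> assms(1)])
  ultimately have "norm2 N (lap N (\<lambda>i j l. A i j l * e i j l + B i j l * cnj (e i j l)))
                     \<le> 2 * product_const (2 * c\<^sup>2) L * (sobolev_const * n + norm2 N (lap N e))"
    by (intro norm2_lap_mult_add_mult_cnj_le[OF assms(1)])
  also have "\<dots> \<le> 2 * product_const (2 * c\<^sup>2) L * ((sobolev_const + 1) * n)"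
    unfolding n_def L_def using \<open>0 \<le> c\<close> norm2_nonneg[of N e] sobolev_const_nonneg
    by (intro mult_left_mono) (simp_all add: algebra_simps product_const_nonneg)
  also have "\<dots> = nle_lap_const c * n"
    unfolding nle_lap_const_def L_def by simp
  finally show ?thesis
    unfolding n_def e_def NLE_eq A_def B_def .
qed

theorem proposition4p2:
  fixes Cs :: real
  assumes "Cs > 0"
  shows "\<exists>C2 C3 :: real. C2 > 0 \<and> C3 > 0 \<and>
    (\<forall>(N::nat) (\<Phi>::grid) (\<phi>::grid).
       N > 0 \<longrightarrow> per N \<Phi> \<longrightarrow> per N \<phi> \<longrightarrow>
       normi N \<Phi> \<le> Cs \<longrightarrow> norm2 N \<Phi> \<le> Cs \<longrightarrow> norm2 N (lap N \<Phi>) \<le> Cs \<longrightarrow>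
       norm2 N \<phi> = 1 \<longrightarrow> normi N \<phi> \<le> Cs + 1/2 \<longrightarrow> norm2 N (lap N \<phi>) \<le> Cs + 1/2 \<longrightarrow>
       norm2 N (NLE \<Phi> \<phi>) \<le> C2 * norm2 N (\<lambda>i j k. \<Phi> i j k - \<phi> i j k) \<and>
       norm2 N (lap N (NLE \<Phi> \<phi>)) \<le> C3 * (norm2 N (\<lambda>i j k. \<Phi> i j k - \<phi> i j k)
                                       + norm2 N (lap N (\<lambda>i j k. \<Phi> i j k - \<phi> i j k))))"
proof -
  define c where "c = Cs + 1/2"
  have "0 < c" using assms by (simp add: c_def)
  have estimates:
    "norm2 N (NLE \<Phi> \<phi>) \<le> 3 * c\<^sup>2 * norm2 N (\<lambda>i j k. \<Phi> i j k - \<phi> i j k) \<and>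
     norm2 N (lap N (NLE \<Phi> \<phi>)) \<le> nle_lap_const c * (norm2 N (\<lambda>i j k. \<Phi> i j k - \<phi> i j k)
                                       + norm2 N (lap N (\<lambda>i j k. \<Phi> i j k - \<phi> i j k)))"
    if "N > 0" "per N \<Phi>" "per N \<phi>" "normi N \<Phi> \<le> Cs" "norm2 N (lap N \<Phi>) \<le> Cs"
      "normi N \<phi> \<le> Cs + 1/2" "norm2 N (lap N \<phi>) \<le> Cs + 1/2" for N \<Phi> \<phi>
  proof -
    have periodic: "grid_periodic N \<Phi>" "grid_periodic N \<phi>"
      using that(2,3) by (simp_all add: per_iff_grid_periodic)
    have "cmod (\<Phi> i j l) \<le> c" "cmod (\<phi> i j l) \<le> c" for i j l
      using norm_le_normi[OF periodic(1) that(1), of i j l] norm_le_normi[OF periodic(2) that(1), of i j l]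
        that(4,6) by (simp_all add: c_def)
    moreover have "norm2 N (lap N \<Phi>) \<le> c" "norm2 N (lap N \<phi>) \<le> c"
      using that(5,7) by (simp_all add: c_def)
    ultimately show ?thesis
      using norm2_NLE_le norm2_lap_NLE_le[OF that(1) periodic] by blast
  qed
  show ?thesis
    using estimates \<open>0 < c\<close> nle_lap_const_pos[OF \<open>0 < c\<close>]
    by (intro exI[of _ "3 * c\<^sup>2"] exI[of _ "nle_lap_const c"]) auto
qed

end
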